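(* Let $G$ be a locally compact group, $p\in(1,\infty)$, $(\pi,E)\in\mathrm{Rep}_p(G)$ and $u\in A_{p,\pi}$. Then $$\|u\|_{A_{p,\pi}}=\inf\Big\{\sum_n\|t_n\|\|s_n\|:\ u(x)=\sum_n\langle\rho_n(x)t_n,s_n\rangle,\ x\in G\Big\},$$ where the infimum is taken over all sequences $((\rho_n,F_n))_{n\in\mathbb{N}}\subseteq\mathrm{Cyc}_{p,\pi}(G)$ and vectors $t_n\in F_n$, $s_n\in F_n^*$ giving such a representation of $u$.
   Context: A representation $(\pi,E)$ of $G$ is a strongly continuous homomorphism from $G$ into the invertible isometries of a Banach space $E$; $\pi(f)=\int_G f(x)\pi(x)dx$ for $f\in L_1(G)$. A $QSL_p$-space is a Banach space isometric to a quotient of a closed subspace of an $L_p$-space; $\mathrm{Rep}_p(G)$ denotes the representations of $G$ on $QSL_p$-spaces. $A_{p,\pi}$ is the space of functions $u(x)=\sum_n\langle\pi(x)\xi_n,\eta_n\rangle$ with $\xi_n\in E$, $\eta_n\in E^*$, $\sum_n\|\xi_n\|\|\eta_n\|<\infty$, with norm $\|u\|_{A_{p,\pi}}$ the infimum of $\sum_n\|\xi_n\|\|\eta_n\|$ over all such expressions. A subrepresentation of $(\pi,E)$ is $(\rho,F)$ with $F$ a closed subspace of $E$ invariant under $\pi$ and $\rho(x)=\pi(x)|_F$; it is cyclic if there is $\xi_0\in F$ with $\rho(L_1(G))\xi_0$ dense in $F$. $\mathrm{Cyc}_{p,\pi}(G)$ denotes the set of cyclic subrepresentations of $(\pi,E)$.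 *)

theory Defs
  imports "HOL-Analysis.Analysis"
begin

text \<open>Complex Banach spaces are modelled as real Banach spaces of type 'e together with
 a complex structure J (multiplication by the imaginary unit), compatible with the norm.\<close>

definition complex_structure :: "('e::real_normed_vector \<Rightarrow> 'e) \<Rightarrow> bool" where
  "complex_structure J \<longleftrightarrow> bounded_linear J \<and> (\<forall>x. J (J x) = - x) \<and>
     (\<forall>\<theta> x. norm (cos \<theta> *\<^sub>R x + sin \<theta> *\<^sub>R J x) = norm x)"

definition cscale :: "('e::real_vector \<Rightarrow> 'e) \<Rightarrow> complex \<Rightarrow> 'e \<Rightarrow> 'e" where
  "cscale J c v = Re c *\<^sub>R v + Im c *\<^sub>R J v"

definition csubspace :: "('e::real_vector \<Rightarrow> 'e) \<Rightarrow> 'e set \<Rightarrow> bool" where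
  "csubspace J F \<longleftrightarrow> 0 \<in> F \<and> (\<forall>x\<in>F. \<forall>y\<in>F. x + y \<in> F) \<and>
     (\<forall>r. \<forall>x\<in>F. r *\<^sub>R x \<in> F) \<and> (\<forall>x\<in>F. J x \<in> F)"

definition cdual :: "('e::real_normed_vector \<Rightarrow> 'e) \<Rightarrow> 'e set \<Rightarrow> ('e \<Rightarrow> complex) \<Rightarrow> bool" where
  "cdual J F s \<longleftrightarrow> (\<forall>x\<in>F. \<forall>y\<in>F. s (x + y) = s x + s y) \<and>
     (\<forall>r. \<forall>x\<in>F. s (r *\<^sub>R x) = of_real r * s x) \<and>
     (\<forall>x\<in>F. s (J x) = \<i> * s x) \<and>
     (\<exists>C. \<forall>x\<in>F. cmod (s x) \<le> C * norm x)"

definition dual_norm :: "'e::real_normed_vector set \<Rightarrow> ('e \<Rightarrow> complex) \<Rightarrow> real" where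
  "dual_norm F s = Sup ((\<lambda>x. cmod (s x)) ` {x\<in>F. norm x \<le> 1})"

definition is_rep :: "('e::real_normed_vector \<Rightarrow> 'e) \<Rightarrow> ('g::topological_group_add \<Rightarrow> 'e \<Rightarrow> 'e) \<Rightarrow> bool" where
  "is_rep J \<pi> \<longleftrightarrow>
     (\<forall>x. bounded_linear (\<pi> x) \<and> (\<forall>v. \<pi> x (J v) = J (\<pi> x v)) \<and>
          (\<forall>v. norm (\<pi> x v) = norm v) \<and> surj (\<pi> x)) \<and>
     (\<forall>x y. \<pi> (x + y) = \<pi> x \<circ> \<pi> y) \<and> \<pi> 0 = id \<and>
     (\<forall>v. continuous_on UNIV (\<lambda>x. \<pi> x v))"

definition left_haar :: "'g::topological_group_add measure \<Rightarrow> bool" where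
  "left_haar \<mu> \<longleftrightarrow> sets \<mu> = sets borel \<and>
     (\<forall>x A. A \<in> sets borel \<longrightarrow> emeasure \<mu> ((\<lambda>y. x + y) ` A) = emeasure \<mu> A) \<and>
     (\<forall>K. compact K \<longrightarrow> emeasure \<mu> K < \<infinity>) \<and>
     (\<forall>U. open U \<and> U \<noteq> {} \<longrightarrow> emeasure \<mu> U > 0) \<and>
     (\<forall>A \<in> sets borel. emeasure \<mu> A = (INF U\<in>{U. open U \<and> A \<subseteq> U}. emeasure \<mu> U)) \<and>
     (\<forall>U. open U \<longrightarrow> emeasure \<mu> U = (SUP K\<in>{K. compact K \<and> K \<subseteq> U}. emeasure \<mu> K))"

text \<open>rho(L_1(G)) xi: the vectors pi(f) xi = int f(x) pi(x) xi dx, f in L_1(G),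
 the (vector valued) integral being characterised weakly\<close>
definition L1_orbit :: "'g::topological_group_add measure \<Rightarrow> ('e::real_normed_vector \<Rightarrow> 'e) \<Rightarrow>
    ('g \<Rightarrow> 'e \<Rightarrow> 'e) \<Rightarrow> 'e \<Rightarrow> 'e set" where
  "L1_orbit \<mu> J \<pi> \<xi> = {v. \<exists>f::'g \<Rightarrow> complex. integrable \<mu> f \<and>
      (\<forall>\<phi>::'e \<Rightarrow> real. bounded_linear \<phi> \<longrightarrow>
          \<phi> v = (\<integral>x. \<phi> (cscale J (f x) (\<pi> x \<xi>)) \<partial>\<mu>))}"

definition cyclic_sub :: "'g::topological_group_add measure \<Rightarrow> ('e::real_normed_vector \<Rightarrow> 'e) \<Rightarrow>
    ('g \<Rightarrow> 'e \<Rightarrow> 'e) \<Rightarrow> 'e set \<Rightarrow> bool" where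
  "cyclic_sub \<mu> J \<pi> F \<longleftrightarrow> closed F \<and> csubspace J F \<and> (\<forall>x. \<pi> x ` F \<subseteq> F) \<and>
     (\<exists>\<xi>0\<in>F. F \<subseteq> closure (L1_orbit \<mu> J \<pi> \<xi>0))"

definition Lp_mem :: "'m measure \<Rightarrow> real \<Rightarrow> ('m \<Rightarrow> complex) \<Rightarrow> bool" where
  "Lp_mem M p f \<longleftrightarrow> f \<in> borel_measurable M \<and> integrable M (\<lambda>x. cmod (f x) powr p)"

definition Lp_norm :: "'m measure \<Rightarrow> real \<Rightarrow> ('m \<Rightarrow> complex) \<Rightarrow> real" where
  "Lp_norm M p f = (\<integral>x. cmod (f x) powr p \<partial>M) powr (1 / p)"

text \<open>E (with complex structure J) is isometric to a quotient S / ker T of a closed subspace S of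
 L_p(M): T is a complex linear surjection S \<rightarrow> E with quotient norm.\<close>
definition QSL :: "real \<Rightarrow> ('e::real_normed_vector \<Rightarrow> 'e) \<Rightarrow> 'm measure \<Rightarrow> bool" where
  "QSL p J M \<longleftrightarrow> (\<exists>(S :: ('m \<Rightarrow> complex) set) (T :: ('m \<Rightarrow> complex) \<Rightarrow> 'e).
     S \<subseteq> {f. Lp_mem M p f} \<and>
     (\<forall>f\<in>S. \<forall>g\<in>S. (\<lambda>x. f x + g x) \<in> S) \<and> (\<forall>c. \<forall>f\<in>S. (\<lambda>x. c * f x) \<in> S) \<and>
     (\<forall>f g. (\<forall>n. g n \<in> S) \<and> Lp_mem M p f \<and>
            (\<lambda>n. Lp_norm M p (\<lambda>x. g n x - f x)) \<longlonglongrightarrow> 0 \<longrightarrow> f \<in> S) \<and>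
     (\<forall>f\<in>S. \<forall>g\<in>S. T (\<lambda>x. f x + g x) = T f + T g) \<and>
     (\<forall>c. \<forall>f\<in>S. T (\<lambda>x. c * f x) = cscale J c (T f)) \<and>
     T ` S = UNIV \<and>
     (\<forall>f\<in>S. norm (T f) = Inf (Lp_norm M p ` {g\<in>S. T g = T f})))"

definition A_reps :: "('e::real_normed_vector \<Rightarrow> 'e) \<Rightarrow> ('g \<Rightarrow> 'e \<Rightarrow> 'e) \<Rightarrow> ('g \<Rightarrow> complex) \<Rightarrow> real set" where
  "A_reps J \<pi> u = {(\<Sum>n. norm (\<xi> n) * dual_norm UNIV (\<eta> n)) | \<xi> \<eta>.
      (\<forall>n. cdual J UNIV (\<eta> n)) \<and> summable (\<lambda>n. norm (\<xi> n) * dual_norm UNIV (\<eta> n)) \<and>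
      (\<forall>x. (\<lambda>n. \<eta> n (\<pi> x (\<xi> n))) sums u x)}"

definition A_mem :: "('e::real_normed_vector \<Rightarrow> 'e) \<Rightarrow> ('g \<Rightarrow> 'e \<Rightarrow> 'e) \<Rightarrow> ('g \<Rightarrow> complex) \<Rightarrow> bool" where
  "A_mem J \<pi> u \<longleftrightarrow> A_reps J \<pi> u \<noteq> {}"

definition A_norm :: "('e::real_normed_vector \<Rightarrow> 'e) \<Rightarrow> ('g \<Rightarrow> 'e \<Rightarrow> 'e) \<Rightarrow> ('g \<Rightarrow> complex) \<Rightarrow> real" where
  "A_norm J \<pi> u = Inf (A_reps J \<pi> u)"

end

(*
  Each admissible representation of u of one kind yields one of the other kind whose cost is no
  larger, so the two infima coincide.  Given u(x) = sum_n <pi(x) xi_n, eta_n>, replace E by the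
  closed invariant complex subspace F_n generated by the orbit pi(G) xi_n and eta_n by its
  restriction to F_n, whose norm can only drop.  F_n is cyclic with generator xi_n: each
  pi(y) xi_n is a norm limit of vectors pi(f) xi_n, where f is the normalised indicator of a compact
  set of positive Haar measure on which pi(.) xi_n stays close to pi(y) xi_n, and the closure of
  pi(L_1(G)) xi_n is a closed invariant complex subspace.  Conversely, a functional s_n on a cyclic subspace F_n extends to E without
  increasing its norm by the Hahn-Banach theorem (real version by Zorn's lemma, then
  complexification through the complex structure J).
*)
theory Submission
  imports Defs
begin

section \<open>Hahn-Banach extension\<close>

(* A partial extension is represented by its graph, so that the union of a chain of partial
  extensions is again one. *)
definition dominated_extension ::
    "'e::real_normed_vector set \<Rightarrow> ('e \<Rightarrow> real) \<Rightarrow> real \<Rightarrow> ('e \<times> real) set \<Rightarrow> bool" where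
  "dominated_extension F \<phi> C G \<longleftrightarrow> single_valued G \<and> (\<forall>x\<in>F. (x, \<phi> x) \<in> G) \<and>
     (\<forall>x y a b. (x, a) \<in> G \<longrightarrow> (y, b) \<in> G \<longrightarrow> (x + y, a + b) \<in> G) \<and>
     (\<forall>x a r. (x, a) \<in> G \<longrightarrow> (r *\<^sub>R x, r * a) \<in> G) \<and>
     (\<forall>x a. (x, a) \<in> G \<longrightarrow> a \<le> C * norm x)"

definition graph_fun :: "('a \<times> 'b) set \<Rightarrow> 'a \<Rightarrow> 'b" where
  "graph_fun G x = (THE y. (x, y) \<in> G)"

lemma graph_fun_eq: "single_valued G \<Longrightarrow> (x, y) \<in> G \<Longrightarrow> graph_fun G x = y"
  unfolding graph_fun_def by (blast intro: the_equality dest: single_valuedD)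

lemma graph_fun_mem: "single_valued G \<Longrightarrow> x \<in> Domain G \<Longrightarrow> (x, graph_fun G x) \<in> G"
  using graph_fun_eq by fastforce

lemma dominated_extension_graph_fun:
  assumes G: "dominated_extension F \<phi> C G"
  defines "h \<equiv> graph_fun G"
  shows "\<And>x y. x \<in> Domain G \<Longrightarrow> y \<in> Domain G \<Longrightarrow> x + y \<in> Domain G \<and> h (x + y) = h x + h y"
    and "\<And>r x. x \<in> Domain G \<Longrightarrow> r *\<^sub>R x \<in> Domain G \<and> h (r *\<^sub>R x) = r * h x"
    and "\<And>x. x \<in> Domain G \<Longrightarrow> h x \<le> C * norm x"
    and "\<And>x. x \<in> F \<Longrightarrow> x \<in> Domain G \<and> h x = \<phi> x"
proof -
  have sv: "single_valued G" using G unfolding dominated_extension_def by blast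
  note mem = graph_fun_mem[OF sv] and eq = graph_fun_eq[OF sv]
  show "x + y \<in> Domain G \<and> h (x + y) = h x + h y" if "x \<in> Domain G" "y \<in> Domain G" for x y
    using G mem[OF that(1)] mem[OF that(2)] eq unfolding dominated_extension_def h_def by blast
  show "r *\<^sub>R x \<in> Domain G \<and> h (r *\<^sub>R x) = r * h x" if "x \<in> Domain G" for r x
    using G mem[OF that] eq unfolding dominated_extension_def h_def by blast
  show "h x \<le> C * norm x" if "x \<in> Domain G" for x
    using G mem[OF that] unfolding dominated_extension_def h_def by blast
  show "x \<in> Domain G \<and> h x = \<phi> x" if "x \<in> F" for x
    using G that eq unfolding dominated_extension_def h_def by blast
qed

lemma dominated_one_dim_bounds:
  fixes h :: "'e::real_normed_vector \<Rightarrow> real"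
  assumes H: "subspace H" and C: "C \<ge> 0"
    and add: "\<And>x y. x \<in> H \<Longrightarrow> y \<in> H \<Longrightarrow> h (x + y) = h x + h y"
    and bound: "\<And>x. x \<in> H \<Longrightarrow> h x \<le> C * norm x"
  obtains a where "\<And>y. y \<in> H \<Longrightarrow> h y - C * norm (y - x0) \<le> a"
    and "\<And>z. z \<in> H \<Longrightarrow> a \<le> C * norm (z + x0) - h z"
proof -
  have sep: "h y - C * norm (y - x0) \<le> C * norm (z + x0) - h z" if "y \<in> H" "z \<in> H" for y z
  proof -
    have "h y + h z \<le> C * norm (y + z)"
      using add bound subspace_add[OF H] that by metis
    also have "\<dots> \<le> C * norm (y - x0) + C * norm (z + x0)"
      using C norm_triangle_ineq[of "y - x0" "z + x0"] by (simp add: mult_left_mono flip: distrib_left)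
    finally show ?thesis by linarith
  qed
  define L where "L = (\<lambda>y. h y - C * norm (y - x0)) ` H"
  have H0: "0 \<in> H" using H by (rule subspace_0)
  have "bdd_above L" unfolding L_def bdd_above_def using sep H0 by blast
  then show thesis
    using that[of "Sup L"] H0 sep unfolding L_def by (auto intro: cSup_upper cSup_least)
qed

lemma dominated_one_dim_extension:
  fixes h :: "'e::real_normed_vector \<Rightarrow> real"
  assumes H: "subspace H" and C: "C \<ge> 0"
    and add: "\<And>x y. x \<in> H \<Longrightarrow> y \<in> H \<Longrightarrow> h (x + y) = h x + h y"
    and scale: "\<And>r x. x \<in> H \<Longrightarrow> h (r *\<^sub>R x) = r * h x"
    and bound: "\<And>x. x \<in> H \<Longrightarrow> h x \<le> C * norm x"
  obtains a where "\<And>y t. y \<in> H \<Longrightarrow> h y + t * a \<le> C * norm (y + t *\<^sub>R x0)"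
proof -
  obtain a where lower: "\<And>y. y \<in> H \<Longrightarrow> h y - C * norm (y - x0) \<le> a"
    and upper: "\<And>z. z \<in> H \<Longrightarrow> a \<le> C * norm (z + x0) - h z"
    using dominated_one_dim_bounds[OF H C add bound] by blast
  have "h y + t * a \<le> C * norm (y + t *\<^sub>R x0)" if y: "y \<in> H" for y t
  proof (cases t "0::real" rule: linorder_cases)
    case equal then show ?thesis using bound y by simp
  next
    case greater
    have "(1/t) *\<^sub>R y + x0 = (1/t) *\<^sub>R (y + t *\<^sub>R x0)" using greater by (simp add: algebra_simps)
    then have n: "norm ((1/t) *\<^sub>R y + x0) = norm (y + t *\<^sub>R x0) / t" using greater by simp
    have "(1/t) *\<^sub>R y \<in> H" using H y by (rule subspace_scale)
    then have "a \<le> C * norm ((1/t) *\<^sub>R y + x0) - h ((1/t) *\<^sub>R y)" by (rule upper)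
    then have "a \<le> (C * norm (y + t *\<^sub>R x0) - h y) / t" by (simp add: n scale[OF y] diff_divide_distrib)
    then show ?thesis using greater by (simp add: field_simps)
  next
    case less
    define r where "r = - 1 / t"
    have r: "r > 0" "r * t = - 1" using less by (auto simp: r_def)
    have "r *\<^sub>R y - x0 = r *\<^sub>R (y + t *\<^sub>R x0)" using r(2) by (simp add: algebra_simps)
    then have n: "norm (r *\<^sub>R y - x0) = r * norm (y + t *\<^sub>R x0)" using r by simp
    have "r *\<^sub>R y \<in> H" using H y by (rule subspace_scale)
    then have "h (r *\<^sub>R y) - C * norm (r *\<^sub>R y - x0) \<le> a" by (rule lower)
    then have "r * (h y - C * norm (y + t *\<^sub>R x0)) \<le> a" by (simp add: n scale[OF y] algebra_simps)
    then have "(- t) * (r * (h y - C * norm (y + t *\<^sub>R x0))) \<le> (- t) * a"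
      using less by (intro mult_left_mono) auto
    moreover have "(- t) * r = 1" using r(2) by (simp add: mult.commute)
    ultimately show ?thesis by (simp add: mult.assoc[symmetric])
  qed
  then show thesis using that by blast
qed

lemma subspace_add_line_unique:
  assumes H: "subspace H" and x0: "x0 \<notin> H" and y: "y1 \<in> H" "y2 \<in> H"
    and eq: "y1 + t1 *\<^sub>R x0 = y2 + t2 *\<^sub>R x0"
  shows "t1 = t2 \<and> y1 = y2"
proof (cases "t1 = t2")
  case True
  then show ?thesis using eq by simp
next
  case False
  have "(t1 - t2) *\<^sub>R x0 = y2 - y1" using eq by (simp add: algebra_simps)
  then have "x0 = (1 / (t1 - t2)) *\<^sub>R (y2 - y1)" using False
    by (metis divide_self_if right_minus_eq scaleR_one scaleR_scaleR times_divide_eq_left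
        times_divide_eq_right)
  then have "x0 \<in> H" using H y by (simp add: subspace_scale subspace_diff)
  then show ?thesis using x0 by blast
qed

lemma dominated_extension_adjoin:
  assumes G: "dominated_extension F \<phi> C G" and H: "subspace (Domain G)" and x0: "x0 \<notin> Domain G"
    and a: "\<And>y t. y \<in> Domain G \<Longrightarrow> graph_fun G y + t * a \<le> C * norm (y + t *\<^sub>R x0)"
  shows "dominated_extension F \<phi> C {(y + t *\<^sub>R x0, graph_fun G y + t * a) | y t. y \<in> Domain G}"
    (is "dominated_extension F \<phi> C ?G'")
proof -
  let ?H = "Domain G" and ?h = "graph_fun G"
  note D = dominated_extension_graph_fun[OF G]
  show ?thesis
    unfolding dominated_extension_def single_valued_def
  proof (intro conjI allI impI ballI)
    fix x c d assume "(x, c) \<in> ?G'" "(x, d) \<in> ?G'"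
    then obtain y1 t1 y2 t2 where "x = y1 + t1 *\<^sub>R x0" "c = ?h y1 + t1 * a" "y1 \<in> ?H"
      "x = y2 + t2 *\<^sub>R x0" "d = ?h y2 + t2 * a" "y2 \<in> ?H" by blast
    then show "c = d" using subspace_add_line_unique[OF H x0] by metis
  next
    fix x assume "x \<in> F"
    then have "x \<in> ?H" "?h x = \<phi> x" using D(4) by auto
    then show "(x, \<phi> x) \<in> ?G'" unfolding mem_Collect_eq by (intro exI[of _ x] exI[of _ 0]) simp
  next
    fix x y c b assume "(x, c) \<in> ?G'" "(y, b) \<in> ?G'"
    then obtain y1 t1 y2 t2 where "x = y1 + t1 *\<^sub>R x0" "c = ?h y1 + t1 * a" "y1 \<in> ?H"
      "y = y2 + t2 *\<^sub>R x0" "b = ?h y2 + t2 * a" "y2 \<in> ?H" by blast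
    moreover from this have "x + y = (y1 + y2) + (t1 + t2) *\<^sub>R x0"
      and "c + b = ?h (y1 + y2) + (t1 + t2) * a"
      using D(1) by (auto simp: algebra_simps)
    ultimately show "(x + y, c + b) \<in> ?G'" using D(1) by blast
  next
    fix x c r assume "(x, c) \<in> ?G'"
    then obtain y t where "x = y + t *\<^sub>R x0" "c = ?h y + t * a" "y \<in> ?H" by blast
    moreover from this have "r *\<^sub>R x = r *\<^sub>R y + (r * t) *\<^sub>R x0" and "r * c = ?h (r *\<^sub>R y) + (r * t) * a"
      using D(2) by (auto simp: algebra_simps)
    ultimately show "(r *\<^sub>R x, r * c) \<in> ?G'" using D(2) by blast
  next
    fix x c assume "(x, c) \<in> ?G'"
    then show "c \<le> C * norm x" using a by blast
  qed
qed

lemma dominated_extension_grow: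
  assumes G: "dominated_extension F \<phi> C G" and x0: "x0 \<notin> Domain G"
    and F: "F \<noteq> {}" and C: "C \<ge> 0"
  obtains G' where "dominated_extension F \<phi> C G'" "G \<subset> G'"
proof -
  let ?H = "Domain G" and ?h = "graph_fun G"
  note D = dominated_extension_graph_fun[OF G]
  obtain x1 where "x1 \<in> F" using F by blast
  then have H0: "0 \<in> ?H" using D(4) D(2)[of x1 0] by auto
  then have H: "subspace ?H" unfolding subspace_def using D(1,2) by blast
  obtain a where a: "\<And>y t. y \<in> ?H \<Longrightarrow> ?h y + t * a \<le> C * norm (y + t *\<^sub>R x0)"
    using dominated_one_dim_extension[OF H C] D(1-3) by metis
  define G' where "G' = {(y + t *\<^sub>R x0, ?h y + t * a) | y t. y \<in> ?H}"
  have "G \<subseteq> G'"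
  proof
    fix q assume q: "q \<in> G"
    obtain x c where xc: "q = (x, c)" by force
    have sv: "single_valued G" using G unfolding dominated_extension_def by blast
    have "x \<in> ?H" "q = (x + 0 *\<^sub>R x0, ?h x + 0 * a)" using q xc graph_fun_eq[OF sv] by auto
    then show "q \<in> G'" unfolding G'_def by blast
  qed
  moreover have "(x0, a) \<in> G'"
    unfolding G'_def mem_Collect_eq using H0 D(2)[of 0 0] by (intro exI[of _ 0] exI[of _ 1]) simp
  ultimately show thesis
    using that dominated_extension_adjoin[OF G H x0 a] x0 unfolding G'_def by blast
qed

lemma dominated_extension_chain_Union:
  assumes "Ch \<in> chains {G. dominated_extension F \<phi> C G}" "Ch \<noteq> {}"
  shows "dominated_extension F \<phi> C (\<Union>Ch)"
proof -
  have ext: "dominated_extension F \<phi> C G" if "G \<in> Ch" for G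
    using assms(1) that unfolding chains_def by blast
  have common: "\<exists>G\<in>Ch. q \<in> G \<and> q' \<in> G" if "q \<in> \<Union>Ch" "q' \<in> \<Union>Ch" for q q'
    using assms(1) that unfolding chains_def chain_subset_def by blast
  show ?thesis
    unfolding dominated_extension_def single_valued_def
  proof (intro conjI allI impI ballI)
    fix x c d assume "(x, c) \<in> \<Union>Ch" "(x, d) \<in> \<Union>Ch"
    then obtain G where "G \<in> Ch" "(x, c) \<in> G" "(x, d) \<in> G" using common by blast
    then show "c = d" using ext[of G] unfolding dominated_extension_def single_valued_def by blast
  next
    fix x assume "x \<in> F"
    then show "(x, \<phi> x) \<in> \<Union>Ch" using assms(2) ext unfolding dominated_extension_def by blast
  next
    fix x y a b assume "(x, a) \<in> \<Union>Ch" "(y, b) \<in> \<Union>Ch"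
    then obtain G where "G \<in> Ch" "(x, a) \<in> G" "(y, b) \<in> G" using common by blast
    then show "(x + y, a + b) \<in> \<Union>Ch" using ext[of G] unfolding dominated_extension_def by blast
  next
    fix x a r assume "(x, a) \<in> \<Union>Ch"
    then show "(r *\<^sub>R x, r * a) \<in> \<Union>Ch" using ext unfolding dominated_extension_def by blast
  next
    fix x a assume "(x, a) \<in> \<Union>Ch"
    then show "a \<le> C * norm x" using ext unfolding dominated_extension_def by blast
  qed
qed

lemma Hahn_Banach_norm_dominated:
  fixes \<phi> :: "'e::real_normed_vector \<Rightarrow> real"
  assumes F: "subspace F" and add: "\<And>x y. x \<in> F \<Longrightarrow> y \<in> F \<Longrightarrow> \<phi> (x + y) = \<phi> x + \<phi> y"
    and scale: "\<And>r x. x \<in> F \<Longrightarrow> \<phi> (r *\<^sub>R x) = r * \<phi> x"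
    and bound: "\<And>x. x \<in> F \<Longrightarrow> \<phi> x \<le> C * norm x" and C: "C \<ge> 0"
  obtains \<Phi> where "linear \<Phi>" "\<And>x. x \<in> F \<Longrightarrow> \<Phi> x = \<phi> x" "\<And>x. \<Phi> x \<le> C * norm x"
proof -
  let ?A = "{G. dominated_extension F \<phi> C G}"
  have F_ne: "F \<noteq> {}" using subspace_0[OF F] by blast
  have "(\<lambda>x. (x, \<phi> x)) ` F \<in> ?A"
    unfolding dominated_extension_def single_valued_def
    using add scale bound subspace_add[OF F] subspace_scale[OF F] by auto
  then have "\<exists>M\<in>?A. \<forall>X\<in>?A. M \<subseteq> X \<longrightarrow> X = M"
  proof (intro Zorn_Lemma2 ballI)
    fix Ch assume "Ch \<in> chains ?A"
    then show "\<exists>U\<in>?A. \<forall>X\<in>Ch. X \<subseteq> U"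
      using \<open>_ \<in> ?A\<close> dominated_extension_chain_Union by (cases "Ch = {}") blast+
  qed
  then obtain M where M: "dominated_extension F \<phi> C M"
    and max: "\<And>X. dominated_extension F \<phi> C X \<Longrightarrow> M \<subseteq> X \<Longrightarrow> X = M" by blast
  have total: "x \<in> Domain M" for x
    using dominated_extension_grow[OF M _ F_ne C, of x] max by blast
  note D = dominated_extension_graph_fun[OF M]
  have "linear (graph_fun M)" by (rule linearI) (use D(1,2) total in simp_all)
  then show thesis using that D(3,4) total by blast
qed

lemma norming_functional:
  fixes w :: "'e::real_normed_vector"
  obtains \<phi> :: "'e \<Rightarrow> real" where "bounded_linear \<phi>" "\<And>x. \<bar>\<phi> x\<bar> \<le> norm x" "\<phi> w = norm w"
proof (cases "w = 0")
  case True
  then show thesis using that[of "\<lambda>_. 0"] by (simp add: bounded_linear_zero)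
next
  case False
  define \<phi> where "\<phi> x = (SOME r. x = r *\<^sub>R w) * norm w" for x
  have \<phi>_scale: "\<phi> (r *\<^sub>R w) = r * norm w" for r
  proof -
    have "r *\<^sub>R w = (SOME r'. r *\<^sub>R w = r' *\<^sub>R w) *\<^sub>R w" by (rule someI[of _ r]) simp
    then show ?thesis unfolding \<phi>_def using False by (metis scaleR_cancel_right)
  qed
  have F: "subspace (range (\<lambda>r. r *\<^sub>R w))"
    unfolding subspace_def by (auto simp: scaleR_add_left[symmetric] image_iff)
  obtain \<Phi> where \<Phi>: "linear \<Phi>" "\<And>x. x \<in> range (\<lambda>r. r *\<^sub>R w) \<Longrightarrow> \<Phi> x = \<phi> x"
    "\<And>x. \<Phi> x \<le> 1 * norm x"
    by (rule Hahn_Banach_norm_dominated[OF F, of \<phi> 1])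
       (auto simp: \<phi>_scale scaleR_add_left[symmetric] distrib_right intro!: mult_right_mono)
  have abs: "\<bar>\<Phi> x\<bar> \<le> norm x" for x
    using \<Phi>(3)[of x] \<Phi>(3)[of "- x"] linear_neg[OF \<Phi>(1), of x] by simp
  have "bounded_linear \<Phi>"
    using \<Phi>(1) abs by (intro bounded_linear_intro[of _ 1]) (auto simp: linear_add linear_scale)
  moreover have "\<Phi> w = norm w" by (metis \<Phi>(2) \<phi>_scale mult_1 rangeI scaleR_one)
  ultimately show thesis using that abs by blast
qed

section \<open>Complex functionals and dual norms\<close>

lemma csubspace_iff_subspace: "csubspace J F \<longleftrightarrow> subspace F \<and> (\<forall>x\<in>F. J x \<in> F)"
  unfolding csubspace_def subspace_def by blast

lemma cdual_subset: "cdual J G s \<Longrightarrow> F \<subseteq> G \<Longrightarrow> cdual J F s"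
  unfolding cdual_def by (meson subsetD)

lemma cdual_zero: "cdual J F s \<Longrightarrow> 0 \<in> F \<Longrightarrow> s 0 = 0"
  unfolding cdual_def by (metis mult_zero_left of_real_0 scaleR_zero_left)

lemma bdd_above_dual_norm: "cdual J F s \<Longrightarrow> bdd_above ((\<lambda>x. cmod (s x)) ` {x\<in>F. norm x \<le> 1})"
proof -
  assume "cdual J F s"
  then obtain C where C: "\<And>x. x \<in> F \<Longrightarrow> cmod (s x) \<le> C * norm x" unfolding cdual_def by blast
  have "cmod (s x) \<le> \<bar>C\<bar>" if "x \<in> F" "norm x \<le> 1" for x
  proof -
    have "C * norm x \<le> \<bar>C\<bar> * norm x" by (simp add: mult_right_mono)
    also have "\<dots> \<le> \<bar>C\<bar>" using that by (simp add: mult_left_le)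
    finally show ?thesis using C[OF that(1)] by linarith
  qed
  then show ?thesis unfolding bdd_above_def by blast
qed

lemma dual_norm_nonneg: "cdual J F s \<Longrightarrow> 0 \<in> F \<Longrightarrow> 0 \<le> dual_norm F s"
proof -
  assume s: "cdual J F s" and F0: "0 \<in> F"
  have "cmod (s 0) \<le> dual_norm F s"
    unfolding dual_norm_def using F0 by (intro cSup_upper bdd_above_dual_norm[OF s]) simp
  then show ?thesis using cdual_zero[OF s F0] by simp
qed

lemma norm_le_dual_norm:
  assumes s: "cdual J F s" and F: "csubspace J F" and x: "x \<in> F"
  shows "cmod (s x) \<le> dual_norm F s * norm x"
proof (cases "x = 0")
  case True
  then show ?thesis using cdual_zero[OF s] x by simp
next
  case False
  define y where "y = (1 / norm x) *\<^sub>R x"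
  have y: "y \<in> F" "norm y \<le> 1" using F x False unfolding y_def csubspace_def by auto
  have "cmod (s y) \<le> dual_norm F s" unfolding dual_norm_def
    by (rule cSup_upper) (use y bdd_above_dual_norm[OF s] in auto)
  moreover have "s y = of_real (1 / norm x) * s x" using s x unfolding y_def cdual_def by blast
  ultimately have "cmod (s x) / norm x \<le> dual_norm F s" by (simp add: norm_mult norm_divide)
  then show ?thesis using False by (simp add: divide_le_eq)
qed

lemma dual_norm_le:
  assumes "0 \<in> F" "\<And>x. x \<in> F \<Longrightarrow> cmod (s x) \<le> C * norm x" "0 \<le> C"
  shows "dual_norm F s \<le> C"
  unfolding dual_norm_def
proof (rule cSup_least)
  show "(\<lambda>x. cmod (s x)) ` {x \<in> F. norm x \<le> 1} \<noteq> {}" using assms by auto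
next
  fix a assume "a \<in> (\<lambda>x. cmod (s x)) ` {x \<in> F. norm x \<le> 1}"
  then obtain x where x: "x \<in> F" "norm x \<le> 1" "a = cmod (s x)" by blast
  have "C * norm x \<le> C" using x assms(3) by (simp add: mult_left_le)
  then show "a \<le> C" using assms(2)[OF x(1)] x by simp
qed

lemma dual_norm_mono: "F \<subseteq> G \<Longrightarrow> 0 \<in> F \<Longrightarrow> cdual J G s \<Longrightarrow> dual_norm F s \<le> dual_norm G s"
  unfolding dual_norm_def by (rule cSup_subset_mono) (auto dest: bdd_above_dual_norm)

lemma complexified_functional:
  fixes \<Phi> :: "'e::real_normed_vector \<Rightarrow> real"
  assumes J: "complex_structure J" and \<Phi>: "linear \<Phi>" and bound: "\<And>x. \<Phi> x \<le> C * norm x"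
    and C: "C \<ge> 0"
  defines "\<eta> \<equiv> \<lambda>x. Complex (\<Phi> x) (- \<Phi> (J x))"
  shows "cdual J UNIV \<eta>" and "dual_norm UNIV \<eta> \<le> C"
proof -
  have J_lin: "linear J" and JJ: "\<And>x. J (J x) = - x"
    and J_rot: "\<And>\<theta> x. norm (cos \<theta> *\<^sub>R x + sin \<theta> *\<^sub>R J x) = norm x"
    using J unfolding complex_structure_def by (auto simp: bounded_linear.linear)
  have add: "\<eta> (x + y) = \<eta> x + \<eta> y" for x y
    unfolding \<eta>_def by (simp add: linear_add[OF J_lin] linear_add[OF \<Phi>] complex_eq_iff)
  have scale: "\<eta> (r *\<^sub>R x) = of_real r * \<eta> x" for r x
    unfolding \<eta>_def by (simp add: linear_scale[OF J_lin] linear_scale[OF \<Phi>] complex_eq_iff)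
  have Jmult: "\<eta> (J x) = \<i> * \<eta> x" for x
    unfolding \<eta>_def by (simp add: JJ linear_neg[OF \<Phi>] complex_eq_iff)
  have rot: "\<eta> (a *\<^sub>R x + b *\<^sub>R J x) = Complex a b * \<eta> x" for a b x
    by (simp add: add scale Jmult complex_eq_iff)
  have cbound: "cmod (\<eta> x) \<le> C * norm x" for x
  proof (cases "\<eta> x = 0")
    case True then show ?thesis using C by simp
  next
    case False
    \<comment> \<open>rotating x by -Arg (\<eta> x) makes \<eta> real and positive on it\<close>
    define \<theta> where "\<theta> = - Arg (\<eta> x)"
    have "Complex (cos \<theta>) (sin \<theta>) = cis \<theta>" by (simp add: complex_eq_iff)
    also have "\<dots> = inverse (cis (Arg (\<eta> x)))" by (simp add: \<theta>_def cis_inverse)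
    also have "\<dots> = inverse (sgn (\<eta> x))" using False by (simp add: cis_Arg)
    finally have "Complex (cos \<theta>) (sin \<theta>) * \<eta> x = inverse (sgn (\<eta> x)) * \<eta> x" by simp
    also have "\<dots> = of_real (cmod (\<eta> x))" using False by (simp add: sgn_eq field_simps)
    finally have "cmod (\<eta> x) = \<Phi> (cos \<theta> *\<^sub>R x + sin \<theta> *\<^sub>R J x)"
      by (metis Complex_eq_0 Re_complex_of_real complex.sel(1) rot \<eta>_def)
    also have "\<dots> \<le> C * norm x" using bound J_rot by metis
    finally show ?thesis .
  qed
  show "cdual J UNIV \<eta>" unfolding cdual_def using add scale Jmult cbound by blast
  show "dual_norm UNIV \<eta> \<le> C" by (rule dual_norm_le) (use cbound C in auto)
qed

lemma cdual_Hahn_Banach: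
  assumes J: "complex_structure J" and F: "csubspace J F" and s: "cdual J F s"
  obtains \<eta> where "cdual J UNIV \<eta>" "\<And>x. x \<in> F \<Longrightarrow> \<eta> x = s x" "dual_norm UNIV \<eta> \<le> dual_norm F s"
proof -
  let ?C = "dual_norm F s"
  have F0: "0 \<in> F" and FJ: "\<And>x. x \<in> F \<Longrightarrow> J x \<in> F" using F unfolding csubspace_def by auto
  have "subspace F" using F by (simp add: csubspace_iff_subspace)
  moreover have C: "?C \<ge> 0" using s F0 by (rule dual_norm_nonneg)
  moreover have "Re (s x) \<le> ?C * norm x" if "x \<in> F" for x
    using norm_le_dual_norm[OF s F that] complex_Re_le_cmod order_trans by blast
  ultimately obtain \<Phi> where \<Phi>: "linear \<Phi>" "\<And>x. x \<in> F \<Longrightarrow> \<Phi> x = Re (s x)" "\<And>x. \<Phi> x \<le> ?C * norm x"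
    using s unfolding cdual_def by (auto intro: Hahn_Banach_norm_dominated[of F "\<lambda>x. Re (s x)" ?C])
  let ?\<eta> = "\<lambda>x. Complex (\<Phi> x) (- \<Phi> (J x))"
  have "?\<eta> x = s x" if "x \<in> F" for x
    using \<Phi>(2)[OF that] \<Phi>(2)[OF FJ[OF that]] s that unfolding cdual_def by (simp add: complex_eq_iff)
  then show thesis using that complexified_functional[OF J \<Phi>(1,3) C] by blast
qed

section \<open>Weak integrals of continuous functions\<close>

(* The integral of f * g is characterised weakly, through real functionals: Bochner integrals of
  'e-valued functions would require 'e to be second countable. *)
definition is_weak_integral ::
    "'a measure \<Rightarrow> ('a \<Rightarrow> real) \<Rightarrow> ('a \<Rightarrow> 'e::real_normed_vector) \<Rightarrow> 'e \<Rightarrow> bool" where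
  "is_weak_integral \<mu> f g v \<longleftrightarrow>
     (\<forall>\<phi>::'e \<Rightarrow> real. bounded_linear \<phi> \<longrightarrow> \<phi> v = (\<integral>x. f x * \<phi> (g x) \<partial>\<mu>))"

lemma is_weak_integral_scale:
  "is_weak_integral \<mu> f g v \<Longrightarrow> is_weak_integral \<mu> (\<lambda>x. c * f x) g (c *\<^sub>R v)"
  unfolding is_weak_integral_def by (simp add: linear_scale bounded_linear.linear mult.assoc)

lemma borel_measurable_continuous_on_UNIV:
  "sets \<mu> = sets borel \<Longrightarrow> continuous_on UNIV h \<Longrightarrow> h \<in> borel_measurable \<mu>"
  using borel_measurable_continuous_onI measurable_cong_sets by blast

lemma integrable_mult_bounded:
  fixes a h :: "'a \<Rightarrow> real"
  assumes a: "integrable \<mu> a" and h: "h \<in> borel_measurable \<mu>" and bound: "\<And>x. a x \<noteq> 0 \<Longrightarrow> \<bar>h x\<bar> \<le> C"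
  shows "integrable \<mu> (\<lambda>x. a x * h x)"
proof (rule Bochner_Integration.integrable_bound)
  show "integrable \<mu> (\<lambda>x. a x * C)" using a by simp
  show "(\<lambda>x. a x * h x) \<in> borel_measurable \<mu>" using borel_measurable_integrable[OF a] h by simp
  have "\<bar>a x\<bar> * \<bar>h x\<bar> \<le> \<bar>a x\<bar> * \<bar>C\<bar>" for x
    using bound[of x] by (cases "a x = 0") (auto intro: mult_left_mono)
  then show "AE x in \<mu>. norm (a x * h x) \<le> norm (a x * C)" by (simp add: abs_mult)
qed

lemma compact_partition_small_oscillation:
  fixes g :: "'a::t2_space \<Rightarrow> 'b::metric_space"
  assumes g: "continuous_on UNIV g" and K: "compact K" and e: "e > 0"
  obtains N :: nat and A :: "nat \<Rightarrow> 'a set" and c :: "nat \<Rightarrow> 'a"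
  where "\<And>j. A j \<in> sets borel" "\<And>j. A j \<subseteq> K" "disjoint_family_on A {..<N}"
    "K = (\<Union>j<N. A j)" "\<And>j x. x \<in> A j \<Longrightarrow> dist (g x) (g (c j)) < e"
proof -
  define V where "V y = g -` ball (g y) e" for y
  have V_open: "open (V y)" for y unfolding V_def by (intro open_vimage g open_ball)
  have "K \<subseteq> (\<Union>y\<in>K. V y)" using e unfolding V_def by auto
  then obtain T where "T \<subseteq> K" "finite T" "K \<subseteq> (\<Union>y\<in>T. V y)"
    using compactE_image[OF K, of K V] V_open by metis
  moreover obtain N :: nat and c where "T = c ` {i. i < N}"
    using finite_imp_nat_seg_image_inj_on[OF \<open>finite T\<close>] by blast
  ultimately have cover: "K \<subseteq> (\<Union>j<N. V (c j))" by auto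
  define A where "A j = K \<inter> V (c j) - (\<Union>i<j. V (c i))" for j
  have "A j \<in> sets borel" for j
    unfolding A_def using K V_open
    by (intro sets.Diff sets.Int sets.finite_UN) (auto intro: borel_closed compact_imp_closed)
  moreover have A_K: "A j \<subseteq> K" for j unfolding A_def by blast
  moreover have "disjoint_family_on A {..<N}"
  proof -
    have "A i \<inter> A j = {}" if "i < j" for i j unfolding A_def using that by blast
    then show ?thesis unfolding disjoint_family_on_def by (metis Int_commute linorder_neqE_nat)
  qed
  moreover have "K = (\<Union>j<N. A j)"
  proof
    show "K \<subseteq> (\<Union>j<N. A j)"
    proof
      fix x assume x: "x \<in> K"
      then obtain j where j: "j < N" "x \<in> V (c j)" using cover by blast
      define i where "i = (LEAST j. x \<in> V (c j))"
      have "x \<in> V (c i)" "i \<le> j" unfolding i_def using j(2) by (auto intro: LeastI Least_le)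
      moreover have "x \<notin> V (c i')" if "i' < i" for i' using not_less_Least that unfolding i_def by blast
      ultimately have "x \<in> A i" "i < N" unfolding A_def using x j(1) by auto
      then show "x \<in> (\<Union>j<N. A j)" by blast
    qed
  qed (use A_K in blast)
  moreover have "dist (g x) (g (c j)) < e" if "x \<in> A j" for j x
    using that unfolding A_def V_def by (simp add: dist_commute)
  ultimately show thesis by (rule that)
qed

lemma Riemann_sum_error:
  fixes f :: "'a \<Rightarrow> real" and N :: nat
  assumes A: "\<And>j. A j \<in> sets \<mu>" "\<And>j. emeasure \<mu> (A j) < \<infinity>" and disj: "disjoint_family_on A {..<N}"
    and f: "f \<in> borel_measurable \<mu>" and close: "\<And>j x. x \<in> A j \<Longrightarrow> \<bar>f x - b j\<bar> \<le> \<delta>"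
  shows "\<bar>(\<Sum>j<N. measure \<mu> (A j) * b j) - (\<integral>x. indicator (\<Union>j<N. A j) x * f x \<partial>\<mu>)\<bar>
    \<le> \<delta> * (\<Sum>j<N. measure \<mu> (A j))"
proof -
  have ind: "indicator (\<Union>j<N. A j) x = (\<Sum>j<N. indicator (A j) x :: real)" for x
    by (rule indicator_UN_disjoint[OF finite_lessThan disj])
  have ind_int: "integrable \<mu> (\<lambda>x. indicator (A j) x * c)" for j and c :: real
    by (intro integrable_mult_left integrable_real_indicator A)
  define h where "h x = (\<Sum>j<N. indicator (A j) x * (b j - f x))" for x
  have h_int: "integrable \<mu> h"
    unfolding h_def
  proof (intro Bochner_Integration.integrable_sum integrable_mult_bounded[where C = \<delta>])
    show "integrable \<mu> (indicator (A j) :: 'a \<Rightarrow> real)" for j by (rule integrable_real_indicator[OF A])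
    show "(\<lambda>x. b j - f x) \<in> borel_measurable \<mu>" for j using f by simp
    show "\<bar>b j - f x\<bar> \<le> \<delta>" if "indicator (A j) x \<noteq> (0::real)" for j x
      using close[of x j] that by (simp add: abs_minus_commute split: split_indicator_asm)
  qed
  define S where "S x = (\<Sum>j<N. indicator (A j) x * b j)" for x
  have S_int: "integrable \<mu> S" unfolding S_def by (rule Bochner_Integration.integrable_sum[OF ind_int])
  have S_integral: "integral\<^sup>L \<mu> S = (\<Sum>j<N. measure \<mu> (A j) * b j)"
    unfolding S_def by (subst Bochner_Integration.integral_sum[OF ind_int]) (use A in \<open>simp add: mult.commute\<close>)
  have "indicator (\<Union>j<N. A j) x * f x = S x - h x" for x
    unfolding S_def h_def ind sum_distrib_right sum_subtractf[symmetric]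
    by (intro sum.cong) (simp_all add: algebra_simps)
  then have "(\<integral>x. indicator (\<Union>j<N. A j) x * f x \<partial>\<mu>) = integral\<^sup>L \<mu> S - integral\<^sup>L \<mu> h"
    using Bochner_Integration.integral_diff[OF S_int h_int] by simp
  then have "\<bar>(\<Sum>j<N. measure \<mu> (A j) * b j) - (\<integral>x. indicator (\<Union>j<N. A j) x * f x \<partial>\<mu>)\<bar>
      = \<bar>integral\<^sup>L \<mu> h\<bar>" by (simp add: S_integral)
  also have "\<dots> \<le> (\<integral>x. \<bar>h x\<bar> \<partial>\<mu>)"
    using Bochner_Integration.integral_norm_bound[of \<mu> h] by simp
  also have "\<dots> \<le> (\<integral>x. (\<Sum>j<N. indicator (A j) x * \<delta>) \<partial>\<mu>)"
  proof (rule Bochner_Integration.integral_mono)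
    show "\<bar>h x\<bar> \<le> (\<Sum>j<N. indicator (A j) x * \<delta>)" for x
      unfolding h_def using close
      by (intro order_trans[OF sum_abs] sum_mono) (auto simp: abs_minus_commute split: split_indicator)
    show "integrable \<mu> (\<lambda>x. \<bar>h x\<bar>)" using h_int by (rule integrable_abs)
    show "integrable \<mu> (\<lambda>x. \<Sum>j<N. indicator (A j) x * \<delta>)"
      by (rule Bochner_Integration.integrable_sum[OF ind_int])
  qed
  also have "\<dots> = \<delta> * (\<Sum>j<N. measure \<mu> (A j))"
    by (subst Bochner_Integration.integral_sum[OF ind_int]) (use A in \<open>simp add: sum_distrib_left mult.commute\<close>)
  finally show ?thesis .
qed

lemma Riemann_sum_approx_weak_integral:
  fixes g :: "'a::t2_space \<Rightarrow> 'e::real_normed_vector" and \<mu> :: "'a measure"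
  assumes sets: "sets \<mu> = sets borel" and g: "continuous_on UNIV g"
    and K: "compact K" "emeasure \<mu> K < \<infinity>" and e: "e > 0"
  shows "\<exists>I. \<forall>\<phi> B. bounded_linear \<phi> \<longrightarrow> (\<forall>x. \<bar>\<phi> x\<bar> \<le> B * norm x) \<longrightarrow> 0 \<le> B \<longrightarrow>
      \<bar>\<phi> I - (\<integral>x. indicator K x * \<phi> (g x) \<partial>\<mu>)\<bar> \<le> B * e * measure \<mu> K"
proof -
  obtain N :: nat and A c where A: "\<And>j. A j \<in> sets borel" "\<And>j. A j \<subseteq> K" "disjoint_family_on A {..<N}"
    "K = (\<Union>j<N. A j)" "\<And>j x. x \<in> A j \<Longrightarrow> dist (g x) (g (c j)) < e"
    using compact_partition_small_oscillation[OF g K(1) e] by metis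
  have A_sets: "A j \<in> sets \<mu>" for j using A(1) sets by simp
  have K_sets: "K \<in> sets \<mu>" using K(1) sets by (simp add: borel_closed compact_imp_closed)
  have A_fin: "emeasure \<mu> (A j) < \<infinity>" for j
    using le_less_trans[OF emeasure_mono[OF A(2) K_sets] K(2)] .
  have measure_K: "measure \<mu> K = (\<Sum>j<N. measure \<mu> (A j))"
    unfolding A(4) using A_sets A_fin[THEN less_imp_neq] A(3) by (intro measure_finite_Union) auto
  show ?thesis
  proof (intro exI allI impI)
    fix \<phi> :: "'e \<Rightarrow> real" and B
    assume \<phi>: "bounded_linear \<phi>" and \<phi>B: "\<forall>x. \<bar>\<phi> x\<bar> \<le> B * norm x" and B: "0 \<le> B"
    have "\<bar>\<phi> (g x) - \<phi> (g (c j))\<bar> \<le> B * e" if "x \<in> A j" for j x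
    proof -
      have "\<bar>\<phi> (g x) - \<phi> (g (c j))\<bar> \<le> B * norm (g x - g (c j))"
        using \<phi>B[rule_format, of "g x - g (c j)"] \<phi> by (simp add: linear_diff bounded_linear.linear)
      also have "\<dots> \<le> B * e" using A(5)[OF that] B by (intro mult_left_mono) (auto simp: dist_norm)
      finally show ?thesis .
    qed
    moreover have "(\<lambda>x. \<phi> (g x)) \<in> borel_measurable \<mu>"
      using sets by (intro borel_measurable_continuous_on_UNIV
          continuous_on_compose2[OF linear_continuous_on[OF \<phi>] g]) auto
    moreover have "\<phi> (\<Sum>j<N. measure \<mu> (A j) *\<^sub>R g (c j)) = (\<Sum>j<N. measure \<mu> (A j) * \<phi> (g (c j)))"
      using \<phi> by (simp add: linear_sum linear_scale bounded_linear.linear)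
    ultimately show "\<bar>\<phi> (\<Sum>j<N. measure \<mu> (A j) *\<^sub>R g (c j)) - (\<integral>x. indicator K x * \<phi> (g x) \<partial>\<mu>)\<bar>
        \<le> B * e * measure \<mu> K"
      using Riemann_sum_error[OF A_sets A_fin A(3), of "\<lambda>x. \<phi> (g x)" "\<lambda>j. \<phi> (g (c j))" "B * e"]
      unfolding measure_K by (simp add: A(4)[symmetric])
  qed
qed

lemma weak_limit_of_approximations:
  fixes I :: "nat \<Rightarrow> 'e::banach" and L :: "('e \<Rightarrow> real) \<Rightarrow> real"
  assumes approx: "\<forall>n \<phi> B. bounded_linear \<phi> \<longrightarrow> (\<forall>x. \<bar>\<phi> x\<bar> \<le> B * norm x) \<longrightarrow> 0 \<le> B \<longrightarrow>
      \<bar>\<phi> (I n) - L \<phi>\<bar> \<le> B * \<epsilon> n"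
    and \<epsilon>: "\<epsilon> \<longlonglongrightarrow> 0"
  shows "\<exists>v. \<forall>\<phi>. bounded_linear \<phi> \<longrightarrow> \<phi> v = L \<phi>"
proof -
  have dist_I: "norm (I n - I k) \<le> \<epsilon> n + \<epsilon> k" for n k
  proof -
    obtain \<phi> :: "'e \<Rightarrow> real" where \<phi>: "bounded_linear \<phi>" "\<And>x. \<bar>\<phi> x\<bar> \<le> norm x"
      "\<phi> (I n - I k) = norm (I n - I k)"
      using norming_functional[of "I n - I k"] by blast
    have "norm (I n - I k) = \<phi> (I n) - \<phi> (I k)" using \<phi>(1,3) by (simp add: linear_diff bounded_linear.linear)
    also have "\<dots> \<le> \<epsilon> n + \<epsilon> k"
    proof -
      have "\<bar>\<phi> (I j) - L \<phi>\<bar> \<le> \<epsilon> j" for j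
        using approx[rule_format, where n = j and \<phi> = \<phi> and B = 1] \<phi>(1,2) by simp
      from this[of n] this[of k] show ?thesis unfolding abs_le_iff by linarith
    qed
    finally show ?thesis .
  qed
  have "Cauchy I"
  proof (rule CauchyI)
    fix e :: real assume "0 < e"
    then obtain M where M: "\<And>n. n \<ge> M \<Longrightarrow> \<bar>\<epsilon> n\<bar> < e / 2"
      using LIMSEQ_D[OF \<epsilon>, of "e / 2"] by auto
    have "norm (I n - I k) < e" if "M \<le> n" "M \<le> k" for n k
      using dist_I[of n k] M[OF that(1)] M[OF that(2)] by linarith
    then show "\<exists>M. \<forall>n\<ge>M. \<forall>k\<ge>M. norm (I n - I k) < e" by blast
  qed
  then obtain v where v: "I \<longlonglongrightarrow> v" using Cauchy_convergent_iff convergent_def by blast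
  have "\<phi> v = L \<phi>" if \<phi>: "bounded_linear \<phi>" for \<phi>
  proof -
    obtain B where B: "B > 0" "\<And>x. norm (\<phi> x) \<le> norm x * B" using bounded_linear.pos_bounded[OF \<phi>] by blast
    have \<phi>B: "\<bar>\<phi> x\<bar> \<le> B * norm x" for x using B(2)[of x] by (simp add: mult.commute)
    have lim0: "(\<lambda>n. B * \<epsilon> n) \<longlonglongrightarrow> 0" using tendsto_mult_right_zero[OF \<epsilon>] .
    have bound: "norm (\<phi> (I n) - L \<phi>) \<le> B * \<epsilon> n" for n
      using approx[rule_format, where n = n and \<phi> = \<phi> and B = B] \<phi> \<phi>B B by simp
    have "(\<lambda>n. \<phi> (I n) - L \<phi>) \<longlonglongrightarrow> 0"
      by (rule Lim_null_comparison[OF always_eventually lim0]) (use bound in blast)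
    then have "(\<lambda>n. \<phi> (I n)) \<longlonglongrightarrow> L \<phi>" by (simp add: LIM_zero_iff)
    then show ?thesis by (rule LIMSEQ_unique[OF bounded_linear.tendsto[OF \<phi> v]])
  qed
  then show ?thesis by blast
qed

lemma weak_integral_indicator_exists:
  fixes g :: "'a::t2_space \<Rightarrow> 'e::banach" and \<mu> :: "'a measure"
  assumes sets: "sets \<mu> = sets borel" and g: "continuous_on UNIV g"
    and K: "compact K" "emeasure \<mu> K < \<infinity>"
  obtains v where "is_weak_integral \<mu> (indicator K) g v"
proof -
  let ?L = "\<lambda>\<phi>::'e \<Rightarrow> real. \<integral>x. indicator K x * \<phi> (g x) \<partial>\<mu>"
  define \<epsilon> where "\<epsilon> n = measure \<mu> K / real (Suc n)" for n
  have "\<forall>n. \<exists>I. \<forall>\<phi> B. bounded_linear \<phi> \<longrightarrow> (\<forall>x. \<bar>\<phi> x\<bar> \<le> B * norm x) \<longrightarrow> 0 \<le> B \<longrightarrow>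
          \<bar>\<phi> I - ?L \<phi>\<bar> \<le> B * (1 / real (Suc n)) * measure \<mu> K"
    by (intro allI Riemann_sum_approx_weak_integral[OF sets g K]) simp
  then obtain I where "\<forall>n \<phi> B. bounded_linear \<phi> \<longrightarrow> (\<forall>x. \<bar>\<phi> x\<bar> \<le> B * norm x) \<longrightarrow> 0 \<le> B \<longrightarrow>
      \<bar>\<phi> (I n) - ?L \<phi>\<bar> \<le> B * (1 / real (Suc n)) * measure \<mu> K"
    by (rule exE[OF choice])
  then have approx: "\<forall>n \<phi> B. bounded_linear \<phi> \<longrightarrow> (\<forall>x. \<bar>\<phi> x\<bar> \<le> B * norm x) \<longrightarrow> 0 \<le> B \<longrightarrow>
      \<bar>\<phi> (I n) - ?L \<phi>\<bar> \<le> B * \<epsilon> n"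
    unfolding \<epsilon>_def by simp
  have "\<epsilon> \<longlonglongrightarrow> 0"
    unfolding \<epsilon>_def using tendsto_mult[OF tendsto_const LIMSEQ_inverse_real_of_nat, of "measure \<mu> K"]
    by (simp add: divide_inverse)
  then obtain v where "\<forall>\<phi>. bounded_linear \<phi> \<longrightarrow> \<phi> v = ?L \<phi>"
    using weak_limit_of_approximations[OF approx] by blast
  then show thesis using that unfolding is_weak_integral_def by blast
qed

lemma weak_integral_average_near:
  fixes g :: "'a \<Rightarrow> 'e::real_normed_vector"
  assumes v: "is_weak_integral \<mu> f g v" and f: "integrable \<mu> f" "\<And>x. 0 \<le> f x" "integral\<^sup>L \<mu> f = 1"
    and g: "\<And>\<phi>::'e \<Rightarrow> real. bounded_linear \<phi> \<Longrightarrow> (\<lambda>x. \<phi> (g x)) \<in> borel_measurable \<mu>"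
    and near: "\<And>x. f x \<noteq> 0 \<Longrightarrow> norm (g x - w) \<le> \<delta>"
  shows "norm (v - w) \<le> \<delta>"
proof -
  obtain \<phi> :: "'e \<Rightarrow> real" where \<phi>: "bounded_linear \<phi>" "\<And>x. \<bar>\<phi> x\<bar> \<le> norm x"
    "\<phi> (v - w) = norm (v - w)"
    using norming_functional[of "v - w"] by blast
  have \<phi>_near: "\<bar>\<phi> (g x) - \<phi> w\<bar> \<le> \<delta>" if "f x \<noteq> 0" for x
    using \<phi>(2)[of "g x - w"] \<phi>(1) near[OF that] by (simp add: linear_diff bounded_linear.linear)
  define D where "D x = f x * (\<phi> (g x) - \<phi> w)" for x
  have D_int: "integrable \<mu> D"
    unfolding D_def using g[OF \<phi>(1)] \<phi>_near by (intro integrable_mult_bounded[OF f(1)]) auto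
  have "\<phi> v = (\<integral>x. D x + f x * \<phi> w \<partial>\<mu>)"
    using v \<phi>(1) unfolding is_weak_integral_def D_def by (simp add: algebra_simps)
  also have "\<dots> = integral\<^sup>L \<mu> D + \<phi> w"
    using D_int f(1,3) by simp
  finally have "norm (v - w) = integral\<^sup>L \<mu> D"
    using \<phi>(1,3) by (simp add: linear_diff bounded_linear.linear)
  also have "\<dots> \<le> (\<integral>x. f x * \<delta> \<partial>\<mu>)"
  proof (rule Bochner_Integration.integral_mono[OF D_int])
    show "integrable \<mu> (\<lambda>x. f x * \<delta>)" using f(1) by simp
    show "D x \<le> f x * \<delta>" for x
      using \<phi>_near[of x] f(2)[of x] unfolding D_def by (cases "f x = 0") (auto intro: mult_left_mono)
  qed
  also have "\<dots> = \<delta>" using f(3) by simp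
  finally show ?thesis .
qed

lemma weak_integral_near_value:
  fixes g :: "'a::t2_space \<Rightarrow> 'e::banach" and \<mu> :: "'a measure"
  assumes sets: "sets \<mu> = sets borel" and g: "continuous_on UNIV g"
    and pos: "\<And>U. open U \<Longrightarrow> U \<noteq> {} \<Longrightarrow> emeasure \<mu> U > 0"
    and inner: "\<And>U. open U \<Longrightarrow> emeasure \<mu> U = (SUP K\<in>{K. compact K \<and> K \<subseteq> U}. emeasure \<mu> K)"
    and fin: "\<And>K. compact K \<Longrightarrow> emeasure \<mu> K < \<infinity>"
    and e: "e > 0"
  obtains f v where "integrable \<mu> f" "is_weak_integral \<mu> f g v" "dist v (g y) < e"
proof -
  define U where "U = g -` ball (g y) (e / 2)"
  have "open U" unfolding U_def by (intro open_vimage g open_ball)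
  moreover have "y \<in> U" unfolding U_def using e by simp
  ultimately have "0 < emeasure \<mu> U" using pos by blast
  then obtain K where K: "compact K" "K \<subseteq> U" "0 < emeasure \<mu> K"
    unfolding inner[OF \<open>open U\<close>] less_SUP_iff by blast
  have K_fin: "emeasure \<mu> K < \<infinity>" by (rule fin[OF K(1)])
  have K_sets: "K \<in> sets \<mu>" using K(1) sets by (simp add: borel_closed compact_imp_closed)
  define m where "m = measure \<mu> K"
  have m: "m > 0" using K(3) K_fin unfolding m_def by (simp add: emeasure_eq_ennreal_measure)
  obtain w where "is_weak_integral \<mu> (indicator K) g w"
    by (rule weak_integral_indicator_exists[OF sets g K(1) K_fin])
  then have v: "is_weak_integral \<mu> (\<lambda>x. (1 / m) * indicator K x) g ((1 / m) *\<^sub>R w)"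
    by (rule is_weak_integral_scale)
  have f_int: "integrable \<mu> (\<lambda>x. (1 / m) * indicator K x)" using K_sets K_fin by simp
  have "norm ((1 / m) *\<^sub>R w - g y) \<le> e / 2"
  proof (rule weak_integral_average_near[OF v f_int])
    show "0 \<le> (1 / m) * indicator K x" for x using m by simp
    show "(\<integral>x. (1 / m) * indicator K x \<partial>\<mu>) = 1"
      using m K_sets by (simp add: m_def)
    show "(\<lambda>x. \<phi> (g x)) \<in> borel_measurable \<mu>" if "bounded_linear \<phi>" for \<phi> :: "'e \<Rightarrow> real"
      using sets by (intro borel_measurable_continuous_on_UNIV
          continuous_on_compose2[OF linear_continuous_on[OF that] g]) auto
    show "norm (g x - g y) \<le> e / 2" if "(1 / m) * indicator K x \<noteq> 0" for x
      using that K(2) unfolding U_def by (auto simp: dist_norm norm_minus_commute split: split_indicator_asm)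
  qed
  then have "dist ((1 / m) *\<^sub>R w) (g y) < e" using e by (simp add: dist_norm)
  then show thesis using that f_int v by blast
qed

section \<open>Cyclic subrepresentations\<close>

lemma cscale_apply_linear:
  "bounded_linear \<phi> \<Longrightarrow> \<phi> (cscale J c w) = Re c * \<phi> w + Im c * \<phi> (J w)"
  unfolding cscale_def by (simp add: linear_add linear_scale bounded_linear.linear)

lemma csubspace_Inter: "(\<And>S. S \<in> SS \<Longrightarrow> csubspace J S) \<Longrightarrow> csubspace J (\<Inter>SS)"
  unfolding csubspace_def by blast

lemma csubspace_closure:
  assumes S: "csubspace J S" and J: "bounded_linear J"
  shows "csubspace J (closure S)"
proof -
  have image_closure: "f ` closure S \<subseteq> closure S" if "bounded_linear f" "\<And>x. x \<in> S \<Longrightarrow> f x \<in> S" for f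
    by (rule image_closure_subset) (use linear_continuous_on[OF that(1)] that(2) closure_subset in auto)
  have "0 \<in> closure S" using S closure_subset unfolding csubspace_def by blast
  moreover have "x + y \<in> closure S" if "x \<in> closure S" "y \<in> closure S" for x y
  proof -
    have "S + S \<subseteq> S" using S unfolding csubspace_def by (auto elim!: set_plus_elim)
    then have "closure S + closure S \<subseteq> closure S" using closure_sum closure_mono by blast
    then show ?thesis using that by auto
  qed
  moreover have "r *\<^sub>R x \<in> closure S" if "x \<in> closure S" for r x
    using image_closure[OF bounded_linear_scaleR_right, of r] S that unfolding csubspace_def by blast
  moreover have "J x \<in> closure S" if "x \<in> closure S" for x
    using image_closure[OF J] S that unfolding csubspace_def by blast
  ultimately show ?thesis unfolding csubspace_def by blast
qed

definition cyclic_span :: "('e::real_normed_vector \<Rightarrow> 'e) \<Rightarrow> ('g \<Rightarrow> 'e \<Rightarrow> 'e) \<Rightarrow> 'e \<Rightarrow> 'e set" where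
  "cyclic_span J \<pi> \<xi> = \<Inter>{S. closed S \<and> csubspace J S \<and> (\<forall>x. \<pi> x \<xi> \<in> S)}"

lemma closed_cyclic_span: "closed (cyclic_span J \<pi> \<xi>)"
  unfolding cyclic_span_def by (rule closed_Inter) blast

lemma csubspace_cyclic_span: "csubspace J (cyclic_span J \<pi> \<xi>)"
  unfolding cyclic_span_def by (rule csubspace_Inter) blast

lemma cyclic_span_subset:
  "closed S \<Longrightarrow> csubspace J S \<Longrightarrow> (\<And>x. \<pi> x \<xi> \<in> S) \<Longrightarrow> cyclic_span J \<pi> \<xi> \<subseteq> S"
  unfolding cyclic_span_def by blast

lemma orbit_subset_cyclic_span: "\<pi> x \<xi> \<in> cyclic_span J \<pi> \<xi>"
  unfolding cyclic_span_def by blast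

lemma cyclic_span_invariant:
  assumes lin: "bounded_linear (\<pi> y)" and J: "\<And>v. \<pi> y (J v) = J (\<pi> y v)"
    and hom: "\<And>x. \<pi> (y + x) \<xi> = \<pi> y (\<pi> x \<xi>)"
  shows "\<pi> y ` cyclic_span J \<pi> \<xi> \<subseteq> cyclic_span J \<pi> \<xi>"
proof -
  have "cyclic_span J \<pi> \<xi> \<subseteq> \<pi> y -` S" if S: "closed S" "csubspace J S" "\<And>x. \<pi> x \<xi> \<in> S" for S
  proof (rule cyclic_span_subset)
    show "closed (\<pi> y -` S)" by (rule closed_vimage[OF S(1) linear_continuous_on[OF lin]])
    show "csubspace J (\<pi> y -` S)"
      using S(2) lin unfolding csubspace_def
      by (simp add: linear_0 linear_add linear_scale bounded_linear.linear J)
    show "\<pi> x \<xi> \<in> \<pi> y -` S" for x using S(3)[of "y + x"] by (simp add: hom)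
  qed
  then show ?thesis unfolding cyclic_span_def by blast
qed

lemma L1_orbitI:
  "integrable \<mu> f \<Longrightarrow> (\<And>\<phi>::'e \<Rightarrow> real. bounded_linear \<phi> \<Longrightarrow> \<phi> v = (\<integral>x. \<phi> (cscale J (f x) (\<pi> x \<xi>)) \<partial>\<mu>))
    \<Longrightarrow> v \<in> L1_orbit \<mu> J \<pi> (\<xi>::'e::real_normed_vector)"
  unfolding L1_orbit_def by blast

lemma L1_orbitE:
  assumes "v \<in> L1_orbit \<mu> J \<pi> (\<xi>::'e::real_normed_vector)"
  obtains f where "integrable \<mu> f"
    "\<And>\<phi>::'e \<Rightarrow> real. bounded_linear \<phi> \<Longrightarrow> \<phi> v = (\<integral>x. \<phi> (cscale J (f x) (\<pi> x \<xi>)) \<partial>\<mu>)"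
  using assms unfolding L1_orbit_def by blast

locale haar_rep =
  fixes \<mu> :: "'g::{topological_group_add, t2_space} measure"
    and J :: "'e::banach \<Rightarrow> 'e" and \<pi> :: "'g \<Rightarrow> 'e \<Rightarrow> 'e"
  assumes haar: "left_haar \<mu>" and J: "complex_structure J" and rep: "is_rep J \<pi>"
begin

lemma sets_haar: "sets \<mu> = sets borel"
  using haar unfolding left_haar_def by (elim conjE) assumption

lemma haar_open_pos: "open U \<Longrightarrow> U \<noteq> {} \<Longrightarrow> emeasure \<mu> U > 0"
  using haar unfolding left_haar_def by (elim conjE) blast

lemma haar_inner_regular:
  assumes "open U"
  shows "emeasure \<mu> U = (SUP K\<in>{K. compact K \<and> K \<subseteq> U}. emeasure \<mu> K)"
proof -
  have "\<forall>U. open U \<longrightarrow> emeasure \<mu> U = (SUP K\<in>{K. compact K \<and> K \<subseteq> U}. emeasure \<mu> K)"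
    using haar unfolding left_haar_def by (elim conjE) assumption
  then show ?thesis using assms by blast
qed

lemma haar_compact_finite: "compact K \<Longrightarrow> emeasure \<mu> K < \<infinity>"
  using haar unfolding left_haar_def by (elim conjE) blast

lemma J_bounded_linear: "bounded_linear J"
  using J unfolding complex_structure_def by (elim conjE) assumption

lemma J_J: "J (J v) = - v"
  using J unfolding complex_structure_def by (elim conjE) blast

lemma
  shows rep_bounded_linear: "bounded_linear (\<pi> x)"
    and rep_J: "\<pi> x (J v) = J (\<pi> x v)"
    and rep_norm: "norm (\<pi> x v) = norm v"
proof -
  have "\<forall>x. bounded_linear (\<pi> x) \<and> (\<forall>v. \<pi> x (J v) = J (\<pi> x v)) \<and> (\<forall>v. norm (\<pi> x v) = norm v) \<and> surj (\<pi> x)"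
    using rep unfolding is_rep_def by (elim conjE) assumption
  then show "bounded_linear (\<pi> x)" "\<pi> x (J v) = J (\<pi> x v)" "norm (\<pi> x v) = norm v" by simp_all
qed

lemma rep_add: "\<pi> (x + y) v = \<pi> x (\<pi> y v)"
proof -
  have "\<forall>x y. \<pi> (x + y) = \<pi> x \<circ> \<pi> y" using rep unfolding is_rep_def by (elim conjE) assumption
  then show ?thesis by simp
qed

lemma rep_zero: "\<pi> 0 v = v"
proof -
  have "\<pi> 0 = id" using rep unfolding is_rep_def by (elim conjE) assumption
  then show ?thesis by simp
qed

lemma rep_continuous: "continuous_on UNIV (\<lambda>x. \<pi> x v)"
proof -
  have "\<forall>v. continuous_on UNIV (\<lambda>x. \<pi> x v)" using rep unfolding is_rep_def by (elim conjE) assumption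
  then show ?thesis by simp
qed

lemma integrable_L1_orbit_component:
  assumes f: "integrable \<mu> f" and \<phi>: "bounded_linear (\<phi> :: 'e \<Rightarrow> real)"
  shows "integrable \<mu> (\<lambda>x. \<phi> (cscale J (f x) (\<pi> x \<xi>)))"
proof -
  have integrable_component: "integrable \<mu> (\<lambda>x. c x * \<psi> (\<pi> x \<xi>))"
    if c: "integrable \<mu> c" and \<psi>: "bounded_linear \<psi>" for c :: "'g \<Rightarrow> real" and \<psi> :: "'e \<Rightarrow> real"
  proof -
    obtain B where B: "\<And>v. norm (\<psi> v) \<le> norm v * B" using bounded_linear.bounded[OF \<psi>] by blast
    show ?thesis
    proof (rule integrable_mult_bounded[OF c])
      show "(\<lambda>x. \<psi> (\<pi> x \<xi>)) \<in> borel_measurable \<mu>"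
        using sets_haar by (intro borel_measurable_continuous_on_UNIV
            continuous_on_compose2[OF linear_continuous_on[OF \<psi>] rep_continuous]) auto
      show "\<bar>\<psi> (\<pi> x \<xi>)\<bar> \<le> norm \<xi> * B" for x using B[of "\<pi> x \<xi>"] by (simp add: rep_norm)
    qed
  qed
  have "integrable \<mu> (\<lambda>x. Re (f x) * \<phi> (\<pi> x \<xi>) + Im (f x) * \<phi> (J (\<pi> x \<xi>)))"
    using integrable_component[OF integrable_bounded_linear[OF bounded_linear_Re f] \<phi>]
      integrable_component[OF integrable_bounded_linear[OF bounded_linear_Im f]
        bounded_linear_compose[OF \<phi> J_bounded_linear]]
    by simp
  then show ?thesis by (simp add: cscale_apply_linear[OF \<phi>])
qed

lemma zero_mem_L1_orbit: "0 \<in> L1_orbit \<mu> J \<pi> \<xi>"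
  by (rule L1_orbitI[of _ "\<lambda>_. 0"]) (simp_all add: cscale_def linear_0 bounded_linear.linear)

lemma L1_orbit_add:
  assumes "v \<in> L1_orbit \<mu> J \<pi> \<xi>" "w \<in> L1_orbit \<mu> J \<pi> \<xi>"
  shows "v + w \<in> L1_orbit \<mu> J \<pi> \<xi>"
proof -
  obtain f where f: "integrable \<mu> f"
    "\<And>\<phi>::'e \<Rightarrow> real. bounded_linear \<phi> \<Longrightarrow> \<phi> v = (\<integral>x. \<phi> (cscale J (f x) (\<pi> x \<xi>)) \<partial>\<mu>)"
    using L1_orbitE[OF assms(1)] by blast
  obtain g where g: "integrable \<mu> g"
    "\<And>\<phi>::'e \<Rightarrow> real. bounded_linear \<phi> \<Longrightarrow> \<phi> w = (\<integral>x. \<phi> (cscale J (g x) (\<pi> x \<xi>)) \<partial>\<mu>)"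
    using L1_orbitE[OF assms(2)] by blast
  show ?thesis
  proof (rule L1_orbitI[of _ "\<lambda>x. f x + g x"])
    show "integrable \<mu> (\<lambda>x. f x + g x)" using f(1) g(1) by (rule Bochner_Integration.integrable_add)
    fix \<phi> :: "'e \<Rightarrow> real" assume \<phi>: "bounded_linear \<phi>"
    have "\<phi> (v + w) = \<phi> v + \<phi> w" using \<phi> by (simp add: linear_add bounded_linear.linear)
    also have "\<dots> = (\<integral>x. \<phi> (cscale J (f x) (\<pi> x \<xi>)) + \<phi> (cscale J (g x) (\<pi> x \<xi>)) \<partial>\<mu>)"
      using f(2)[OF \<phi>] g(2)[OF \<phi>] integrable_L1_orbit_component[OF f(1) \<phi>]
        integrable_L1_orbit_component[OF g(1) \<phi>] by simp
    also have "\<dots> = (\<integral>x. \<phi> (cscale J (f x + g x) (\<pi> x \<xi>)) \<partial>\<mu>)"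
      by (rule Bochner_Integration.integral_cong) (simp_all add: cscale_apply_linear[OF \<phi>] algebra_simps)
    finally show "\<phi> (v + w) = (\<integral>x. \<phi> (cscale J (f x + g x) (\<pi> x \<xi>)) \<partial>\<mu>)" .
  qed
qed

lemma L1_orbit_scaleR:
  assumes "v \<in> L1_orbit \<mu> J \<pi> \<xi>"
  shows "r *\<^sub>R v \<in> L1_orbit \<mu> J \<pi> \<xi>"
proof -
  obtain f where f: "integrable \<mu> f"
    "\<And>\<phi>::'e \<Rightarrow> real. bounded_linear \<phi> \<Longrightarrow> \<phi> v = (\<integral>x. \<phi> (cscale J (f x) (\<pi> x \<xi>)) \<partial>\<mu>)"
    using L1_orbitE[OF assms] by blast
  show ?thesis
  proof (rule L1_orbitI[of _ "\<lambda>x. of_real r * f x"])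
    show "integrable \<mu> (\<lambda>x. of_real r * f x)" using f(1) by simp
    fix \<phi> :: "'e \<Rightarrow> real" assume \<phi>: "bounded_linear \<phi>"
    have "\<phi> (r *\<^sub>R v) = r * \<phi> v" using \<phi> by (simp add: linear_scale bounded_linear.linear)
    also have "\<dots> = (\<integral>x. r * \<phi> (cscale J (f x) (\<pi> x \<xi>)) \<partial>\<mu>)" using f(2)[OF \<phi>] by simp
    also have "\<dots> = (\<integral>x. \<phi> (cscale J (of_real r * f x) (\<pi> x \<xi>)) \<partial>\<mu>)"
      by (rule Bochner_Integration.integral_cong) (simp_all add: cscale_apply_linear[OF \<phi>] algebra_simps)
    finally show "\<phi> (r *\<^sub>R v) = (\<integral>x. \<phi> (cscale J (of_real r * f x) (\<pi> x \<xi>)) \<partial>\<mu>)" .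
  qed
qed

lemma L1_orbit_J:
  assumes "v \<in> L1_orbit \<mu> J \<pi> \<xi>"
  shows "J v \<in> L1_orbit \<mu> J \<pi> \<xi>"
proof -
  obtain f where f: "integrable \<mu> f"
    "\<And>\<phi>::'e \<Rightarrow> real. bounded_linear \<phi> \<Longrightarrow> \<phi> v = (\<integral>x. \<phi> (cscale J (f x) (\<pi> x \<xi>)) \<partial>\<mu>)"
    using L1_orbitE[OF assms] by blast
  show ?thesis
  proof (rule L1_orbitI[of _ "\<lambda>x. \<i> * f x"])
    show "integrable \<mu> (\<lambda>x. \<i> * f x)" using f(1) by simp
    fix \<phi> :: "'e \<Rightarrow> real" assume \<phi>: "bounded_linear \<phi>"
    have "\<phi> (J v) = (\<integral>x. \<phi> (J (cscale J (f x) (\<pi> x \<xi>))) \<partial>\<mu>)"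
      by (rule f(2)[OF bounded_linear_compose[OF \<phi> J_bounded_linear]])
    also have "\<dots> = (\<integral>x. \<phi> (cscale J (\<i> * f x) (\<pi> x \<xi>)) \<partial>\<mu>)"
      using J_bounded_linear by (simp add: cscale_def linear_simps J_J)
    finally show "\<phi> (J v) = (\<integral>x. \<phi> (cscale J (\<i> * f x) (\<pi> x \<xi>)) \<partial>\<mu>)" .
  qed
qed

lemma csubspace_L1_orbit: "csubspace J (L1_orbit \<mu> J \<pi> \<xi>)"
  unfolding csubspace_def using zero_mem_L1_orbit L1_orbit_add L1_orbit_scaleR L1_orbit_J by blast

lemma rep_in_closure_L1_orbit: "\<pi> y \<xi> \<in> closure (L1_orbit \<mu> J \<pi> \<xi>)"
  unfolding closure_approachable
proof (intro allI impI)
  fix e :: real assume "e > 0"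
  obtain f v where f: "integrable \<mu> f" and v: "is_weak_integral \<mu> f (\<lambda>x. \<pi> x \<xi>) v"
    and near: "dist v (\<pi> y \<xi>) < e"
    by (rule weak_integral_near_value[where y = y, OF sets_haar rep_continuous haar_open_pos
        haar_inner_regular haar_compact_finite \<open>e > 0\<close>])
  have "v \<in> L1_orbit \<mu> J \<pi> \<xi>"
  proof (rule L1_orbitI[of _ "\<lambda>x. complex_of_real (f x)"])
    show "integrable \<mu> (\<lambda>x. complex_of_real (f x))"
      using integrable_bounded_linear[OF bounded_linear_of_real f] .
    show "\<phi> v = (\<integral>x. \<phi> (cscale J (complex_of_real (f x)) (\<pi> x \<xi>)) \<partial>\<mu>)"
      if "bounded_linear \<phi>" for \<phi> :: "'e \<Rightarrow> real"
      using v that unfolding is_weak_integral_def by (simp add: cscale_apply_linear)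
  qed
  then show "\<exists>v\<in>L1_orbit \<mu> J \<pi> \<xi>. dist v (\<pi> y \<xi>) < e" using near by blast
qed

lemma cyclic_sub_cyclic_span: "cyclic_sub \<mu> J \<pi> (cyclic_span J \<pi> \<xi>)"
proof -
  have "cyclic_span J \<pi> \<xi> \<subseteq> closure (L1_orbit \<mu> J \<pi> \<xi>)"
    by (intro cyclic_span_subset closed_closure csubspace_closure[OF csubspace_L1_orbit J_bounded_linear]
        rep_in_closure_L1_orbit)
  moreover have "\<pi> x ` cyclic_span J \<pi> \<xi> \<subseteq> cyclic_span J \<pi> \<xi>" for x
    by (rule cyclic_span_invariant) (rule rep_bounded_linear rep_J rep_add)+
  moreover have "\<xi> \<in> cyclic_span J \<pi> \<xi>" using orbit_subset_cyclic_span[of \<pi> 0 \<xi> J] by (simp add: rep_zero)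
  ultimately show ?thesis
    unfolding cyclic_sub_def by (intro conjI allI bexI closed_cyclic_span csubspace_cyclic_span)
qed

end

section \<open>Comparison of the two infima\<close>

definition cyclic_reps ::
    "'g::topological_group_add measure \<Rightarrow> ('e::real_normed_vector \<Rightarrow> 'e) \<Rightarrow> ('g \<Rightarrow> 'e \<Rightarrow> 'e) \<Rightarrow>
     ('g \<Rightarrow> complex) \<Rightarrow> real set" where
  "cyclic_reps \<mu> J \<pi> u = {(\<Sum>n. norm (t n) * dual_norm (F n) (s n)) | F t s.
     (\<forall>n. cyclic_sub \<mu> J \<pi> (F n) \<and> t n \<in> F n \<and> cdual J (F n) (s n)) \<and>
     summable (\<lambda>n. norm (t n) * dual_norm (F n) (s n)) \<and>
     (\<forall>x. (\<lambda>n. s n (\<pi> x (t n))) sums u x)}"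

lemma cInf_eq_if_mutually_dominated:
  fixes A B :: "'a::conditionally_complete_lattice set"
  assumes "A \<noteq> {}" "bdd_below A" "bdd_below B"
    and AB: "\<And>a. a \<in> A \<Longrightarrow> \<exists>b\<in>B. b \<le> a" and BA: "\<And>b. b \<in> B \<Longrightarrow> \<exists>a\<in>A. a \<le> b"
  shows "Inf A = Inf B"
proof (rule antisym)
  have "B \<noteq> {}" using assms(1) AB by blast
  then show "Inf A \<le> Inf B"
    using BA cInf_lower[OF _ assms(2)] by (blast intro: cInf_greatest order_trans)
  show "Inf B \<le> Inf A"
    using assms(1) AB cInf_lower[OF _ assms(3)] by (blast intro: cInf_greatest order_trans)
qed

lemma suminf_norm_dual_norm_nonneg:
  assumes "\<And>n. cdual J (F n) (s n)" "\<And>n. 0 \<in> F n"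
    and "summable (\<lambda>n. norm (t n) * dual_norm (F n) (s n))"
  shows "0 \<le> (\<Sum>n. norm (t n) * dual_norm (F n) (s n))"
  using assms dual_norm_nonneg by (intro suminf_nonneg mult_nonneg_nonneg norm_ge_zero) blast+

lemma A_reps_nonneg: "a \<in> A_reps J \<pi> u \<Longrightarrow> 0 \<le> a"
  unfolding A_reps_def using suminf_norm_dual_norm_nonneg[of J "\<lambda>_. UNIV"] by blast

lemma cyclic_reps_nonneg:
  assumes "r \<in> cyclic_reps \<mu> J \<pi> u"
  shows "0 \<le> r"
proof -
  obtain F t s where r: "r = (\<Sum>n. norm (t n) * dual_norm (F n) (s n))"
    and F: "\<And>n. cyclic_sub \<mu> J \<pi> (F n)" and "\<And>n. t n \<in> F n" and s: "\<And>n. cdual J (F n) (s n)"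
    and summable: "summable (\<lambda>n. norm (t n) * dual_norm (F n) (s n))"
    using assms unfolding cyclic_reps_def by blast
  have "0 \<in> F n" for n using F[of n] unfolding cyclic_sub_def csubspace_def by blast
  then show ?thesis unfolding r by (rule suminf_norm_dual_norm_nonneg[OF s _ summable])
qed

lemma cyclic_reps_dominated_by_A_reps:
  assumes J: "complex_structure J" and "r \<in> cyclic_reps \<mu> J \<pi> u"
  shows "\<exists>a\<in>A_reps J \<pi> u. a \<le> r"
proof -
  obtain F t s where r: "r = (\<Sum>n. norm (t n) * dual_norm (F n) (s n))"
    and F: "\<And>n. cyclic_sub \<mu> J \<pi> (F n)" and t: "\<And>n. t n \<in> F n" and s: "\<And>n. cdual J (F n) (s n)"
    and summable: "summable (\<lambda>n. norm (t n) * dual_norm (F n) (s n))"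
    and sums: "\<forall>x. (\<lambda>n. s n (\<pi> x (t n))) sums u x"
    using assms(2) unfolding cyclic_reps_def by blast
  have "\<exists>\<eta>. cdual J UNIV \<eta> \<and> (\<forall>x\<in>F n. \<eta> x = s n x) \<and> dual_norm UNIV \<eta> \<le> dual_norm (F n) (s n)" for n
  proof -
    have "csubspace J (F n)" using F unfolding cyclic_sub_def by blast
    then obtain \<eta> where "cdual J UNIV \<eta>" "\<And>x. x \<in> F n \<Longrightarrow> \<eta> x = s n x"
      "dual_norm UNIV \<eta> \<le> dual_norm (F n) (s n)"
      using cdual_Hahn_Banach[OF J _ s] by blast
    then show ?thesis by blast
  qed
  then obtain \<eta> where \<eta>: "\<And>n. cdual J UNIV (\<eta> n)" "\<And>n x. x \<in> F n \<Longrightarrow> \<eta> n x = s n x"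
    "\<And>n. dual_norm UNIV (\<eta> n) \<le> dual_norm (F n) (s n)"
    by metis
  have le: "norm (t n) * dual_norm UNIV (\<eta> n) \<le> norm (t n) * dual_norm (F n) (s n)" for n
    using \<eta>(3) by (rule mult_left_mono) simp
  have nonneg: "0 \<le> norm (t n) * dual_norm UNIV (\<eta> n)" for n
    using dual_norm_nonneg[OF \<eta>(1)] by simp
  have summable': "summable (\<lambda>n. norm (t n) * dual_norm UNIV (\<eta> n))"
    by (rule summable_comparison_test'[OF summable, of 0]) (use le nonneg in auto)
  have "\<pi> x (t n) \<in> F n" for x n using F t unfolding cyclic_sub_def by blast
  then have "(\<lambda>n. \<eta> n (\<pi> x (t n))) sums u x" for x using sums \<eta>(2) by simp
  then have "(\<Sum>n. norm (t n) * dual_norm UNIV (\<eta> n)) \<in> A_reps J \<pi> u"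
    unfolding A_reps_def using \<eta>(1) summable' by blast
  moreover have "(\<Sum>n. norm (t n) * dual_norm UNIV (\<eta> n)) \<le> r"
    unfolding r by (rule suminf_le[OF le summable' summable])
  ultimately show ?thesis by blast
qed

context haar_rep
begin

lemma A_reps_dominated_by_cyclic_reps:
  assumes "a \<in> A_reps J \<pi> u"
  shows "\<exists>r\<in>cyclic_reps \<mu> J \<pi> u. r \<le> a"
proof -
  obtain \<xi> \<eta> where a: "a = (\<Sum>n. norm (\<xi> n) * dual_norm UNIV (\<eta> n))" and \<eta>: "\<forall>n. cdual J UNIV (\<eta> n)"
    and summable: "summable (\<lambda>n. norm (\<xi> n) * dual_norm UNIV (\<eta> n))"
    and sums: "\<forall>x. (\<lambda>n. \<eta> n (\<pi> x (\<xi> n))) sums u x"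
    using assms unfolding A_reps_def by blast
  define F where "F n = cyclic_span J \<pi> (\<xi> n)" for n
  have F: "cyclic_sub \<mu> J \<pi> (F n) \<and> \<xi> n \<in> F n \<and> cdual J (F n) (\<eta> n)" for n
    unfolding F_def using cyclic_sub_cyclic_span orbit_subset_cyclic_span[of \<pi> 0 "\<xi> n" J] rep_zero
      cdual_subset \<eta> by fastforce
  have F0: "0 \<in> F n" for n using csubspace_cyclic_span unfolding F_def csubspace_def by blast
  have le: "norm (\<xi> n) * dual_norm (F n) (\<eta> n) \<le> norm (\<xi> n) * dual_norm UNIV (\<eta> n)" for n
    using dual_norm_mono[OF subset_UNIV F0] \<eta> by (intro mult_left_mono) auto
  have nonneg: "0 \<le> norm (\<xi> n) * dual_norm (F n) (\<eta> n)" for n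
    using dual_norm_nonneg[of J "F n" "\<eta> n"] F F0 by simp
  have summable': "summable (\<lambda>n. norm (\<xi> n) * dual_norm (F n) (\<eta> n))"
    by (rule summable_comparison_test'[OF summable, of 0]) (use le nonneg in auto)
  have "(\<Sum>n. norm (\<xi> n) * dual_norm (F n) (\<eta> n)) \<in> cyclic_reps \<mu> J \<pi> u"
    unfolding cyclic_reps_def using F summable' sums by blast
  moreover have "(\<Sum>n. norm (\<xi> n) * dual_norm (F n) (\<eta> n)) \<le> a"
    unfolding a by (rule suminf_le[OF le summable' summable])
  ultimately show ?thesis by blast
qed

lemma A_norm_eq_Inf_cyclic_reps:
  assumes "A_mem J \<pi> u"
  shows "A_norm J \<pi> u = Inf (cyclic_reps \<mu> J \<pi> u)"
  unfolding A_norm_def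
proof (rule cInf_eq_if_mutually_dominated)
  show "A_reps J \<pi> u \<noteq> {}" using assms unfolding A_mem_def .
  show "bdd_below (A_reps J \<pi> u)" using A_reps_nonneg by (rule bdd_belowI)
  show "bdd_below (cyclic_reps \<mu> J \<pi> u)" using cyclic_reps_nonneg by (rule bdd_belowI)
qed (use A_reps_dominated_by_cyclic_reps cyclic_reps_dominated_by_A_reps[OF J] in auto)

end

theorem proposition1:
  fixes \<mu> :: "'g::{topological_group_add, t2_space} measure"
    and J :: "'e::banach \<Rightarrow> 'e"
    and \<pi> :: "'g \<Rightarrow> 'e \<Rightarrow> 'e"
    and M :: "'m measure"
    and p :: real
    and u :: "'g \<Rightarrow> complex"
  assumes "locally_compact_space (euclidean :: 'g topology)"
    and "left_haar \<mu>"
    and "1 < p"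
    and "complex_structure J"
    and "QSL p J M"
    and "is_rep J \<pi>"
    and "A_mem J \<pi> u"
  shows "A_norm J \<pi> u = Inf {(\<Sum>n. norm (t n) * dual_norm (F n) (s n)) | F t s.
            (\<forall>n. cyclic_sub \<mu> J \<pi> (F n) \<and> t n \<in> F n \<and> cdual J (F n) (s n)) \<and>
            summable (\<lambda>n. norm (t n) * dual_norm (F n) (s n)) \<and>
            (\<forall>x. (\<lambda>n. s n (\<pi> x (t n))) sums u x)}"
proof -
  interpret haar_rep \<mu> J \<pi> using assms(2,4,6) by unfold_locales
  show ?thesis using A_norm_eq_Inf_cyclic_reps[OF assms(7)] unfolding cyclic_reps_def .
qed

end
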